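(* Let $0<\alpha<1$ and $p,q>0$. If $\mathrm{Tr}\,R_{\alpha,p}(A,B)\le\mathrm{Tr}\,\mathcal{A}_{\alpha,q}(A,B)$ holds for all positive definite $2\times2$ matrices $A,B$, then $\min\{1,\alpha(1-\alpha)p\}\le q$.
   Context: For positive definite $A,B$: $R_{\alpha,p}(A,B):=\bigl(A^{\frac{1-\alpha}{2}p}B^{\alpha p}A^{\frac{1-\alpha}{2}p}\bigr)^{1/p}$ and $\mathcal{A}_{\alpha,q}(A,B):=((1-\alpha)A^q+\alpha B^q)^{1/q}$. $\mathrm{Tr}$ is the usual trace. *)

theory Defs
  imports "HOL-Analysis.Analysis"
begin

definition cmat_adj :: "complex^'n^'n \<Rightarrow> complex^'n^'n" where
  "cmat_adj A = (\<chi> i j. cnj (A $ j $ i))"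

definition cmat_trace :: "complex^'n^'n \<Rightarrow> complex" where
  "cmat_trace A = (\<Sum>i\<in>UNIV. A $ i $ i)"

definition cmat_diag :: "('n \<Rightarrow> complex) \<Rightarrow> complex^'n^'n" where
  "cmat_diag d = (\<chi> i j. if i = j then d i else 0)"

definition cmat_unitary :: "complex^'n^'n \<Rightarrow> bool" where
  "cmat_unitary U \<longleftrightarrow> U ** cmat_adj U = mat 1 \<and> cmat_adj U ** U = mat 1"

definition cmat_hermitian :: "complex^'n^'n \<Rightarrow> bool" where
  "cmat_hermitian A \<longleftrightarrow> cmat_adj A = A"

definition cmat_posdef :: "complex^'n^'n \<Rightarrow> bool" where
  "cmat_posdef A \<longleftrightarrow> cmat_hermitian A \<and>
     (\<forall>x::complex^'n. x \<noteq> 0 \<longrightarrow> Re (\<Sum>i\<in>UNIV. \<Sum>j\<in>UNIV. cnj (x $ i) * A $ i $ j * x $ j) > 0)"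

text \<open>Real power \<open>A powr t\<close> of a positive definite matrix: if \<open>A = U diag(d) U*\<close>
  with U unitary and all \<open>d i > 0\<close>, then \<open>A^t = U diag(d^t) U*\<close>
  (well defined by uniqueness of the functional calculus).\<close>
definition cmat_powr :: "complex^'n^'n \<Rightarrow> real \<Rightarrow> complex^'n^'n" where
  "cmat_powr A t = (THE B. \<exists>U d. cmat_unitary U \<and> (\<forall>i. d i > 0) \<and>
       A = U ** cmat_diag (\<lambda>i. complex_of_real (d i)) ** cmat_adj U \<and>
       B = U ** cmat_diag (\<lambda>i. complex_of_real (d i powr t)) ** cmat_adj U)"

definition R_mean :: "real \<Rightarrow> real \<Rightarrow> complex^'n^'n \<Rightarrow> complex^'n^'n \<Rightarrow> complex^'n^'n" where
  "R_mean \<alpha> p A B = cmat_powr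
     (cmat_powr A ((1 - \<alpha>) * p / 2) ** cmat_powr B (\<alpha> * p) ** cmat_powr A ((1 - \<alpha>) * p / 2))
     (1 / p)"

definition A_mean :: "real \<Rightarrow> real \<Rightarrow> complex^'n^'n \<Rightarrow> complex^'n^'n \<Rightarrow> complex^'n^'n" where
  "A_mean \<alpha> q A B = cmat_powr ((1 - \<alpha>) *\<^sub>R cmat_powr A q + \<alpha> *\<^sub>R cmat_powr B q) (1 / q)"

end

theory Submission
  imports Defs
begin

text \<open>Test the inequality on \<open>A = diag(1, \<delta>)\<close> and on \<open>B\<close>, the matrix with the same
  eigenvalues whose eigenvector for \<open>1\<close> is \<open>(c, s) = (cos \<theta>, sin \<theta>)\<close>, and let
  \<open>\<delta> \<rightarrow> 0\<close>. The matrix \<open>A^{(1-\<alpha>)p/2} B^{\<alpha>p} A^{(1-\<alpha>)p/2}\<close> tends to \<open>diag(c\<^sup>2, 0)\<close>,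
  so \<open>Tr R_{\<alpha>,p}(A,B) \<rightarrow> c^{2/p}\<close>; the matrix \<open>(1-\<alpha>)A^q + \<alpha>B^q\<close> tends to a matrix of
  trace \<open>1\<close> and determinant \<open>\<alpha>(1-\<alpha>)s\<^sup>2 = u(1-u)\<close>, so \<open>Tr \<A>_{\<alpha>,q}(A,B) \<rightarrow> (1-u)^{1/q} + u^{1/q}\<close>.
  With \<open>k = \<alpha>(1-\<alpha>)\<close>, the limiting inequality reads
  \<open>(1 - u(1-u)/k)^{1/p} \<le> (1-u)^{1/q} + u^{1/q}\<close>. If \<open>q < 1\<close> and \<open>q < kp\<close>, this fails
  for small \<open>u > 0\<close>: both sides equal \<open>1\<close> at \<open>u = 0\<close>, the right side drops with slope
  \<open>1/q\<close>, the left one only with slope \<open>1/(kp)\<close>, and \<open>u^{1/q} = o(u)\<close>.\<close>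

section \<open>Powers of unitarily diagonalised matrices\<close>

lemma matrix_mult_cmat_diag_nth: "(M ** cmat_diag d) $ i $ j = M $ i $ j * d j"
  unfolding cmat_diag_def matrix_matrix_mult_def
  by (simp add: if_distrib[where f="\<lambda>x. _ * x"] cong: if_cong)

lemma cmat_diag_matrix_mult_nth: "(cmat_diag d ** M) $ i $ j = d i * M $ i $ j"
  unfolding cmat_diag_def matrix_matrix_mult_def
  by (simp add: if_distrib[where f="\<lambda>x. x * _"] cong: if_cong)

text \<open>If two unitary diagonalisations describe the same matrix, the unitary
  \<open>W = V* U\<close> intertwines the two diagonals, hence \<open>W\<^sub>i\<^sub>j = 0\<close> unless \<open>d\<^sub>j = e\<^sub>i\<close>;
  so \<open>W\<close> intertwines any function of the diagonals as well.\<close>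
lemma unitary_diag_conj_map_eq:
  fixes U V :: "complex^'n^'n"
  assumes U: "cmat_unitary U" and V: "cmat_unitary V"
    and eq: "U ** cmat_diag (\<lambda>i. complex_of_real (d i)) ** cmat_adj U
           = V ** cmat_diag (\<lambda>i. complex_of_real (e i)) ** cmat_adj V"
  shows "U ** cmat_diag (\<lambda>i. complex_of_real (f (d i))) ** cmat_adj U
           = V ** cmat_diag (\<lambda>i. complex_of_real (f (e i))) ** cmat_adj V"
proof -
  define W where "W = cmat_adj V ** U"
  define D where "D = cmat_diag (\<lambda>i. complex_of_real (d i))"
  define E where "E = cmat_diag (\<lambda>i. complex_of_real (e i))"
  define FD where "FD = cmat_diag (\<lambda>i. complex_of_real (f (d i)))"
  define FE where "FE = cmat_diag (\<lambda>i. complex_of_real (f (e i)))"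
  have UU: "cmat_adj U ** U = mat 1" "U ** cmat_adj U = mat 1"
    using U by (auto simp: cmat_unitary_def)
  have VV: "cmat_adj V ** V = mat 1" "V ** cmat_adj V = mat 1"
    using V by (auto simp: cmat_unitary_def)
  have "W ** D = cmat_adj V ** (U ** D ** cmat_adj U) ** U"
    by (simp add: W_def UU flip: matrix_mul_assoc)
  also have "\<dots> = cmat_adj V ** (V ** E ** cmat_adj V) ** U"
    using eq by (simp add: D_def E_def)
  also have "\<dots> = E ** W"
    by (simp add: W_def matrix_mul_assoc VV
        flip: matrix_mul_assoc[of "cmat_adj V" V])
  finally have WD: "W ** D = E ** W" .
  have "(W ** FD) $ i $ j = (FE ** W) $ i $ j" for i j
  proof -
    have "W $ i $ j * of_real (d j) = of_real (e i) * W $ i $ j"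
      using arg_cong[OF WD, of "\<lambda>M. M $ i $ j"]
      by (simp add: D_def E_def matrix_mult_cmat_diag_nth cmat_diag_matrix_mult_nth)
    then have "W $ i $ j = 0 \<or> d j = e i"
      by (auto simp: mult.commute)
    then show ?thesis
      by (auto simp: FD_def FE_def matrix_mult_cmat_diag_nth cmat_diag_matrix_mult_nth mult.commute)
  qed
  then have WF: "W ** FD = FE ** W"
    by (simp add: vec_eq_iff)
  have VW: "V ** W = U"
    by (metis W_def VV(2) matrix_mul_assoc matrix_mul_lid)
  have "U ** FD ** cmat_adj U = V ** W ** FD ** cmat_adj U"
    by (simp add: VW)
  also have "\<dots> = V ** FE ** W ** cmat_adj U"
    by (metis matrix_mul_assoc WF)
  also have "\<dots> = V ** FE ** cmat_adj V"
    by (simp add: W_def UU flip: matrix_mul_assoc)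
  finally show ?thesis
    by (simp add: FD_def FE_def)
qed

lemma cmat_powr_unitary_diag:
  assumes U: "cmat_unitary U" and d: "\<And>i. d i > 0"
    and A: "A = U ** cmat_diag (\<lambda>i. complex_of_real (d i)) ** cmat_adj U"
  shows "cmat_powr A t = U ** cmat_diag (\<lambda>i. complex_of_real (d i powr t)) ** cmat_adj U"
  unfolding cmat_powr_def
proof (rule the_equality)
  fix B
  assume "\<exists>V e. cmat_unitary V \<and> (\<forall>i. 0 < e i) \<and>
      A = V ** cmat_diag (\<lambda>i. complex_of_real (e i)) ** cmat_adj V \<and>
      B = V ** cmat_diag (\<lambda>i. complex_of_real (e i powr t)) ** cmat_adj V"
  then obtain V e where "cmat_unitary V"
      "A = V ** cmat_diag (\<lambda>i. complex_of_real (e i)) ** cmat_adj V"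
      "B = V ** cmat_diag (\<lambda>i. complex_of_real (e i powr t)) ** cmat_adj V"
    by blast
  then show "B = U ** cmat_diag (\<lambda>i. complex_of_real (d i powr t)) ** cmat_adj U"
    using unitary_diag_conj_map_eq[OF _ U, of V e d "\<lambda>x. x powr t"] A by simp
qed (use U d A in blast)

section \<open>Real symmetric \<open>2 \<times> 2\<close> matrices\<close>

definition mat2 :: "complex \<Rightarrow> complex \<Rightarrow> complex \<Rightarrow> complex \<Rightarrow> complex^2^2" where
  "mat2 a b c d = (\<chi> i j. if i = 1 then (if j = 1 then a else b) else (if j = 1 then c else d))"

lemma mat2_nth [simp]:
  "mat2 a b c d $ 1 $ 1 = a" "mat2 a b c d $ 1 $ 2 = b"
  "mat2 a b c d $ 2 $ 1 = c" "mat2 a b c d $ 2 $ 2 = d"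
  by (simp_all add: mat2_def)

lemma mat2_eq_iff: "mat2 a b c d = mat2 a' b' c' d' \<longleftrightarrow> a = a' \<and> b = b' \<and> c = c' \<and> d = d'"
  by (auto simp: vec_eq_iff forall_2)

lemma mat2_mult [simp]:
  "mat2 a b c d ** mat2 a' b' c' d' =
     mat2 (a*a' + b*c') (a*b' + b*d') (c*a' + d*c') (c*b' + d*d')"
  by (auto simp: vec_eq_iff forall_2 matrix_matrix_mult_def sum_2)

lemma mat2_adj [simp]: "cmat_adj (mat2 a b c d) = mat2 (cnj a) (cnj c) (cnj b) (cnj d)"
  by (auto simp: vec_eq_iff forall_2 cmat_adj_def)

lemma mat2_scaleR [simp]: "r *\<^sub>R mat2 a b c d = mat2 (r *\<^sub>R a) (r *\<^sub>R b) (r *\<^sub>R c) (r *\<^sub>R d)"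
  by (auto simp: vec_eq_iff forall_2)

lemma mat2_add [simp]: "mat2 a b c d + mat2 a' b' c' d' = mat2 (a+a') (b+b') (c+c') (d+d')"
  by (auto simp: vec_eq_iff forall_2)

lemma cmat_trace_mat2 [simp]: "cmat_trace (mat2 a b c d) = a + d"
  by (simp add: cmat_trace_def sum_2)

lemma cmat_diag_eq_mat2: "cmat_diag f = mat2 (f 1) 0 0 (f 2)"
  by (auto simp: vec_eq_iff forall_2 cmat_diag_def)

lemma mat_1_eq_mat2: "(mat 1 :: complex^2^2) = mat2 1 0 0 1"
  by (auto simp: vec_eq_iff forall_2 mat_def)

definition sym2 :: "real \<Rightarrow> real \<Rightarrow> real \<Rightarrow> complex^2^2" where
  "sym2 a b d = mat2 (of_real a) (of_real b) (of_real b) (of_real d)"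

definition rot2 :: "real \<Rightarrow> real \<Rightarrow> complex^2^2" where
  "rot2 c s = mat2 (of_real c) (of_real (-s)) (of_real s) (of_real c)"

lemma sym2_scaleR [simp]: "r *\<^sub>R sym2 a b d = sym2 (r*a) (r*b) (r*d)"
  unfolding sym2_def mat2_scaleR by (simp add: scaleR_conv_of_real)

lemma sym2_add [simp]: "sym2 a b d + sym2 a' b' d' = sym2 (a+a') (b+b') (d+d')"
  by (simp add: sym2_def)

lemma cmat_trace_sym2 [simp]: "cmat_trace (sym2 a b d) = of_real (a + d)"
  by (simp add: sym2_def)

lemma sym2_sandwich_diag: "sym2 1 0 e ** sym2 a b d ** sym2 1 0 e = sym2 a (e * b) (e * e * d)"
  by (simp add: sym2_def mat2_eq_iff)

lemma rot2_unitary: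
  assumes "c\<^sup>2 + s\<^sup>2 = 1"
  shows "cmat_unitary (rot2 c s)"
proof -
  have "complex_of_real c * complex_of_real c + complex_of_real s * complex_of_real s = 1"
    using assms by (metis of_real_add of_real_mult power2_eq_square of_real_1)
  then show ?thesis
    unfolding cmat_unitary_def rot2_def mat_1_eq_mat2 by (simp add: mat2_eq_iff algebra_simps)
qed

lemma rot2_conj_diag:
  "rot2 c s ** cmat_diag (\<lambda>i. complex_of_real (if i = 1 then l1 else l2)) ** cmat_adj (rot2 c s)
   = sym2 (c\<^sup>2 * l1 + s\<^sup>2 * l2) (c * s * (l1 - l2)) (s\<^sup>2 * l1 + c\<^sup>2 * l2)"
  unfolding rot2_def sym2_def cmat_diag_eq_mat2
  by (simp add: mat2_eq_iff algebra_simps power2_eq_square)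

definition sym2_pos :: "real \<Rightarrow> real \<Rightarrow> real \<Rightarrow> bool" where
  "sym2_pos a b d \<longleftrightarrow> 0 < a \<and> b\<^sup>2 < a * d"

definition sym2_eig_max :: "real \<Rightarrow> real \<Rightarrow> real \<Rightarrow> real" where
  "sym2_eig_max a b d = (a + d + sqrt ((a - d)\<^sup>2 + 4 * b\<^sup>2)) / 2"

definition sym2_eig_min :: "real \<Rightarrow> real \<Rightarrow> real \<Rightarrow> real" where
  "sym2_eig_min a b d = (a + d - sqrt ((a - d)\<^sup>2 + 4 * b\<^sup>2)) / 2"

lemma sym2_pos_diag_pos:
  assumes "sym2_pos a b d"
  shows "0 < a" "0 < d"
proof -
  have "0 < a" "b\<^sup>2 < a * d"
    using assms by (simp_all add: sym2_pos_def)
  then show "0 < a" "0 < d"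
    using zero_le_power2[of b] by (metis order.strict_trans1 zero_less_mult_pos)+
qed

lemma sym2_eig_eqI:
  assumes "x + y = a + d" and "x * y = a * d - b\<^sup>2" and "y \<le> x"
  shows "sym2_eig_max a b d = x" "sym2_eig_min a b d = y"
proof -
  have "(a - d)\<^sup>2 + 4 * b\<^sup>2 = (a + d)\<^sup>2 - 4 * (a * d - b\<^sup>2)"
    by (simp add: power2_eq_square algebra_simps)
  also have "\<dots> = (x + y)\<^sup>2 - 4 * (x * y)"
    by (simp only: assms(1,2))
  also have "\<dots> = (x - y)\<^sup>2"
    by (simp add: power2_eq_square algebra_simps)
  finally have "sqrt ((a - d)\<^sup>2 + 4 * b\<^sup>2) = x - y"
    using assms(3) by simp
  then show "sym2_eig_max a b d = x" "sym2_eig_min a b d = y"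
    using assms(1) by (simp_all add: sym2_eig_max_def sym2_eig_min_def)
qed

lemma sym2_eig_pos:
  assumes "sym2_pos a b d"
  shows "0 < sym2_eig_min a b d" "0 < sym2_eig_max a b d"
proof -
  define S where "S = sqrt ((a - d)\<^sup>2 + 4 * b\<^sup>2)"
  have "0 < a" "0 < d"
    using sym2_pos_diag_pos[OF assms] by simp_all
  have "S < sqrt ((a + d)\<^sup>2)"
    unfolding S_def using assms
    by (intro real_sqrt_less_mono) (simp add: sym2_pos_def power2_eq_square algebra_simps)
  also have "\<dots> = a + d"
    using \<open>0 < a\<close> \<open>0 < d\<close> by simp
  finally have "S < a + d" .
  moreover have "0 \<le> S"
    by (simp add: S_def)
  ultimately show "0 < sym2_eig_min a b d" "0 < sym2_eig_max a b d"
    by (simp_all add: sym2_eig_min_def sym2_eig_max_def flip: S_def)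
qed

text \<open>The unit eigenvector \<open>(c, s)\<close> for the larger eigenvalue is at half the angle of
  \<open>(a - d, 2 b)\<close>.\<close>
lemma sym2_eig_rotation:
  obtains c s where "c\<^sup>2 + s\<^sup>2 = 1"
    "a = c\<^sup>2 * sym2_eig_max a b d + s\<^sup>2 * sym2_eig_min a b d"
    "b = c * s * (sym2_eig_max a b d - sym2_eig_min a b d)"
    "d = s\<^sup>2 * sym2_eig_max a b d + c\<^sup>2 * sym2_eig_min a b d"
proof -
  define \<rho> where "\<rho> = sqrt ((a - d)\<^sup>2 + 4 * b\<^sup>2)"
  have "\<rho> \<ge> 0" and \<rho>sq: "\<rho>\<^sup>2 = (a - d)\<^sup>2 + 4 * b\<^sup>2"
    by (simp_all add: \<rho>_def)
  obtain \<psi> where \<psi>: "a - d = \<rho> * cos \<psi>" "2 * b = \<rho> * sin \<psi>"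
  proof (cases "\<rho> = 0")
    case True
    then have "a - d = 0" "b = 0"
      using \<rho>sq by (smt (verit) power2_less_eq_zero_iff zero_le_power2)+
    with True that[of 0] show ?thesis
      by simp
  next
    case False
    with \<open>\<rho> \<ge> 0\<close> have "\<rho> > 0"
      by simp
    have "((a - d) / \<rho>)\<^sup>2 + (2 * b / \<rho>)\<^sup>2 = ((a - d)\<^sup>2 + 4 * b\<^sup>2) / \<rho>\<^sup>2"
      by (simp add: power_divide power_mult_distrib add_divide_distrib)
    also have "\<dots> = 1"
      using \<open>\<rho> > 0\<close> by (simp flip: \<rho>sq)
    finally have "((a - d) / \<rho>)\<^sup>2 + (2 * b / \<rho>)\<^sup>2 = 1" .
    then obtain \<psi> where "(a - d) / \<rho> = cos \<psi>" "2 * b / \<rho> = sin \<psi>"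
      by (metis sincos_total_2pi)
    with \<open>\<rho> > 0\<close> that[of \<psi>] show ?thesis
      by (simp add: divide_eq_eq)
  qed
  define c where "c = cos (\<psi> / 2)"
  define s where "s = sin (\<psi> / 2)"
  have cs: "c\<^sup>2 + s\<^sup>2 = 1"
    by (simp add: c_def s_def)
  have "cos \<psi> = c\<^sup>2 - s\<^sup>2" "sin \<psi> = 2 * s * c"
    using cos_double[of "\<psi> / 2"] sin_double[of "\<psi> / 2"] by (simp_all add: c_def s_def)
  with \<psi> have ad: "a - d = \<rho> * (c\<^sup>2 - s\<^sup>2)" and b: "b = \<rho> * s * c"
    by simp_all
  have max: "sym2_eig_max a b d = (a + d + \<rho>) / 2" and min: "sym2_eig_min a b d = (a + d - \<rho>) / 2"
    by (simp_all add: sym2_eig_max_def sym2_eig_min_def \<rho>_def)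
  show ?thesis
  proof (rule that[OF cs])
    show "a = c\<^sup>2 * sym2_eig_max a b d + s\<^sup>2 * sym2_eig_min a b d"
      unfolding max min using ad cs by algebra
    show "b = c * s * (sym2_eig_max a b d - sym2_eig_min a b d)"
      unfolding max min using b by (simp add: field_simps)
    show "d = s\<^sup>2 * sym2_eig_max a b d + c\<^sup>2 * sym2_eig_min a b d"
      unfolding max min using ad cs by algebra
  qed
qed

lemma cmat_powr_sym2_rotation:
  assumes "c\<^sup>2 + s\<^sup>2 = 1" and "0 < l1" and "0 < l2"
  shows "cmat_powr (sym2 (c\<^sup>2 * l1 + s\<^sup>2 * l2) (c * s * (l1 - l2)) (s\<^sup>2 * l1 + c\<^sup>2 * l2)) t
       = sym2 (c\<^sup>2 * l1 powr t + s\<^sup>2 * l2 powr t) (c * s * (l1 powr t - l2 powr t))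
           (s\<^sup>2 * l1 powr t + c\<^sup>2 * l2 powr t)"
proof -
  have "cmat_powr (sym2 (c\<^sup>2 * l1 + s\<^sup>2 * l2) (c * s * (l1 - l2)) (s\<^sup>2 * l1 + c\<^sup>2 * l2)) t
      = rot2 c s ** cmat_diag (\<lambda>i. complex_of_real ((if i = 1 then l1 else l2) powr t)) ** cmat_adj (rot2 c s)"
    by (rule cmat_powr_unitary_diag[OF rot2_unitary[OF assms(1)]])
       (use assms(2,3) in \<open>auto simp: rot2_conj_diag\<close>)
  also have "(\<lambda>i. complex_of_real ((if i = 1 then l1 else l2) powr t))
      = (\<lambda>i. complex_of_real (if i = 1 then l1 powr t else l2 powr t))"
    by auto
  finally show ?thesis
    by (simp add: rot2_conj_diag)
qed

lemma trace_cmat_powr_sym2: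
  assumes "sym2_pos a b d"
  shows "Re (cmat_trace (cmat_powr (sym2 a b d) t))
       = sym2_eig_max a b d powr t + sym2_eig_min a b d powr t"
proof -
  define M where "M = sym2_eig_max a b d"
  define m where "m = sym2_eig_min a b d"
  obtain c s where cs: "c\<^sup>2 + s\<^sup>2 = 1" and
    abd: "c\<^sup>2 * M + s\<^sup>2 * m = a" "c * s * (M - m) = b" "s\<^sup>2 * M + c\<^sup>2 * m = d"
    unfolding M_def m_def by (metis sym2_eig_rotation)
  have "0 < M" "0 < m"
    using sym2_eig_pos[OF assms] by (simp_all add: M_def m_def)
  have "cmat_powr (sym2 a b d) t = sym2 (c\<^sup>2 * M powr t + s\<^sup>2 * m powr t) (c * s * (M powr t - m powr t))
           (s\<^sup>2 * M powr t + c\<^sup>2 * m powr t)"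
    using cmat_powr_sym2_rotation[OF cs \<open>0 < M\<close> \<open>0 < m\<close>, of t] by (simp only: abd)
  also have "c\<^sup>2 * M powr t + s\<^sup>2 * m powr t + (s\<^sup>2 * M powr t + c\<^sup>2 * m powr t)
      = (c\<^sup>2 + s\<^sup>2) * (M powr t + m powr t)"
    by (simp add: algebra_simps)
  ultimately show ?thesis
    using cs by (simp add: M_def m_def)
qed

lemma sym2_quadratic_form_pos:
  assumes "sym2_pos a b d"
  shows "0 \<le> a * x\<^sup>2 + 2 * b * x * y + d * y\<^sup>2"
    and "x \<noteq> 0 \<or> y \<noteq> 0 \<Longrightarrow> 0 < a * x\<^sup>2 + 2 * b * x * y + d * y\<^sup>2"
proof -
  have "0 < a" and det: "0 < a * d - b\<^sup>2"
    using assms by (simp_all add: sym2_pos_def)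
  have complete_square:
    "a * (a * x\<^sup>2 + 2 * b * x * y + d * y\<^sup>2) = (a * x + b * y)\<^sup>2 + (a * d - b\<^sup>2) * y\<^sup>2"
    by (simp add: power2_eq_square algebra_simps)
  have "0 \<le> (a * x + b * y)\<^sup>2 + (a * d - b\<^sup>2) * y\<^sup>2"
    using det by simp
  then show "0 \<le> a * x\<^sup>2 + 2 * b * x * y + d * y\<^sup>2"
    using \<open>0 < a\<close> complete_square by (metis zero_le_mult_iff not_less)
  assume "x \<noteq> 0 \<or> y \<noteq> 0"
  then have "0 < (a * x + b * y)\<^sup>2 + (a * d - b\<^sup>2) * y\<^sup>2"
    using \<open>0 < a\<close> det by (cases "y = 0") (simp_all add: add_nonneg_pos)
  then show "0 < a * x\<^sup>2 + 2 * b * x * y + d * y\<^sup>2"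
    using \<open>0 < a\<close> complete_square by (metis zero_less_mult_pos)
qed

lemma cmat_posdef_sym2:
  assumes "sym2_pos a b d"
  shows "cmat_posdef (sym2 a b d)"
  unfolding cmat_posdef_def
proof (intro conjI allI impI)
  show "cmat_hermitian (sym2 a b d)"
    by (simp add: cmat_hermitian_def sym2_def)
  fix z :: "complex^2"
  assume "z \<noteq> 0"
  define Q where "Q x y = a * x\<^sup>2 + 2 * b * x * y + d * y\<^sup>2" for x y
  have "Re (\<Sum>i\<in>UNIV. \<Sum>j\<in>UNIV. cnj (z $ i) * sym2 a b d $ i $ j * z $ j)
      = Q (Re (z $ 1)) (Re (z $ 2)) + Q (Im (z $ 1)) (Im (z $ 2))"
    by (simp add: sum_2 sym2_def Q_def power2_eq_square algebra_simps)
  moreover have "(Re (z $ 1) \<noteq> 0 \<or> Re (z $ 2) \<noteq> 0) \<or> (Im (z $ 1) \<noteq> 0 \<or> Im (z $ 2) \<noteq> 0)"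
    using \<open>z \<noteq> 0\<close> by (auto simp: vec_eq_iff forall_2 complex_eq_iff)
  ultimately show "Re (\<Sum>i\<in>UNIV. \<Sum>j\<in>UNIV. cnj (z $ i) * sym2 a b d $ i $ j * z $ j) > 0"
    using sym2_quadratic_form_pos[OF assms, of "Re (z $ 1)" "Re (z $ 2)"]
      sym2_quadratic_form_pos[OF assms, of "Im (z $ 1)" "Im (z $ 2)"]
    unfolding Q_def by (smt (verit))
qed

lemma sym2_pos_rotation:
  assumes "c\<^sup>2 + s\<^sup>2 = 1" and "0 < l1" and "0 < l2"
  shows "sym2_pos (c\<^sup>2 * l1 + s\<^sup>2 * l2) (c * s * (l1 - l2)) (s\<^sup>2 * l1 + c\<^sup>2 * l2)"
proof -
  have "min l1 l2 = (c\<^sup>2 + s\<^sup>2) * min l1 l2"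
    using assms(1) by simp
  also have "\<dots> \<le> c\<^sup>2 * l1 + s\<^sup>2 * l2"
    by (simp add: distrib_right add_mono mult_left_mono)
  finally have "0 < c\<^sup>2 * l1 + s\<^sup>2 * l2"
    using assms(2,3) by linarith
  moreover have "(c\<^sup>2 * l1 + s\<^sup>2 * l2) * (s\<^sup>2 * l1 + c\<^sup>2 * l2) - (c * s * (l1 - l2))\<^sup>2
      = l1 * l2 * (c\<^sup>2 + s\<^sup>2)\<^sup>2"
    by (simp add: power2_eq_square algebra_simps)
  moreover have "0 < l1 * l2 * (c\<^sup>2 + s\<^sup>2)\<^sup>2"
    using assms by simp
  ultimately show ?thesis
    unfolding sym2_pos_def by linarith
qed

lemma sym2_pos_sandwich:
  assumes "sym2_pos a b d" and "0 < e"
  shows "sym2_pos a (e * b) (e * e * d)"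
  using assms mult_strict_left_mono[of "b\<^sup>2" "a * d" "e\<^sup>2"]
  by (simp add: sym2_pos_def power_mult_distrib power2_eq_square mult_ac)

lemma sym2_pos_scale:
  assumes "sym2_pos a b d" and "0 < r"
  shows "sym2_pos (r * a) (r * b) (r * d)"
  using assms mult_strict_left_mono[of "b\<^sup>2" "a * d" "r\<^sup>2"]
  by (simp add: sym2_pos_def power_mult_distrib power2_eq_square mult_ac)

lemma sym2_pos_add_diag:
  assumes "sym2_pos a b d" and "0 \<le> x" and "0 \<le> y"
  shows "sym2_pos (x + a) b (y + d)"
proof -
  have "0 < a" "0 < d"
    using sym2_pos_diag_pos[OF assms(1)] by simp_all
  then have "a * d \<le> (x + a) * (y + d)"
    using assms(2,3) by (intro mult_mono) simp_all
  with assms show ?thesis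
    by (simp add: sym2_pos_def)
qed

lemma tendsto_trace_cmat_powr_sym2:
  assumes "(a \<longlongrightarrow> a0) F" and "(b \<longlongrightarrow> b0) F" and "(d \<longlongrightarrow> d0) F"
    and pos: "\<forall>\<^sub>F x in F. sym2_pos (a x) (b x) (d x)" and "0 < t"
  shows "((\<lambda>x. Re (cmat_trace (cmat_powr (sym2 (a x) (b x) (d x)) t)))
           \<longlongrightarrow> sym2_eig_max a0 b0 d0 powr t + sym2_eig_min a0 b0 d0 powr t) F"
proof -
  have "((\<lambda>x. sym2_eig_max (a x) (b x) (d x)) \<longlongrightarrow> sym2_eig_max a0 b0 d0) F"
       "((\<lambda>x. sym2_eig_min (a x) (b x) (d x)) \<longlongrightarrow> sym2_eig_min a0 b0 d0) F"
    unfolding sym2_eig_max_def sym2_eig_min_def using assms(1-3) by (auto intro!: tendsto_intros)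
  moreover have "\<forall>\<^sub>F x in F. 0 \<le> sym2_eig_max (a x) (b x) (d x) \<and> 0 \<le> sym2_eig_min (a x) (b x) (d x)"
    using pos by eventually_elim (auto dest: sym2_eig_pos intro: less_imp_le)
  ultimately have "((\<lambda>x. sym2_eig_max (a x) (b x) (d x) powr t + sym2_eig_min (a x) (b x) (d x) powr t)
      \<longlongrightarrow> sym2_eig_max a0 b0 d0 powr t + sym2_eig_min a0 b0 d0 powr t) F"
    using \<open>0 < t\<close> by (intro tendsto_add tendsto_powr' tendsto_const) (auto elim: eventually_mono)
  then show ?thesis
    by (rule Lim_transform_eventually) (use pos in \<open>auto elim: eventually_mono simp: trace_cmat_powr_sym2\<close>)
qed

section \<open>Real powers near zero\<close>

lemma tendsto_powr_at_right_0:
  assumes "0 < t"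
  shows "((\<lambda>\<delta>::real. \<delta> powr t) \<longlongrightarrow> 0) (at_right 0)"
  using assms by (intro tendsto_zero_powrI tendsto_ident_at tendsto_const)
    (auto simp: eventually_at_right_less eventually_at_filter)

lemma eventually_powr_gap:
  fixes k m r :: real
  assumes "0 < k" and "1 < r" and "m < k * r"
  shows "\<forall>\<^sub>F u in at_right 0. (1 - u) powr r + u powr r < (1 - u * (1 - u) / k) powr m"
proof -
  define G where "G u = (1 - u * (1 - u) / k) powr m - (1 - u) powr r" for u
  have "G 0 = 0"
    by (simp add: G_def)
  have "DERIV (\<lambda>u. 1 - u * (1 - u) / k) 0 :> - 1 / k"
    using \<open>0 < k\<close> by (auto intro!: derivative_eq_intros simp: field_simps)
  moreover have "DERIV (\<lambda>u. 1 - u) 0 :> - 1"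
    by (auto intro!: derivative_eq_intros)
  ultimately have "DERIV G 0 :> m * (1 - 0 * (1 - 0) / k) powr (m - of_nat 1) * (- 1 / k)
      - r * (1 - 0) powr (r - of_nat 1) * (- 1)"
    unfolding G_def by (intro DERIV_diff DERIV_fun_powr) simp_all
  then have "DERIV G 0 :> r - m / k"
    by simp
  from DERIV_D[OF this] have "((\<lambda>u. G u / u) \<longlongrightarrow> r - m / k) (at 0)"
    using \<open>G 0 = 0\<close> by simp
  then have "((\<lambda>u. G u / u) \<longlongrightarrow> r - m / k) (at_right 0)"
    by (rule tendsto_mono[OF at_le, rotated]) simp
  moreover have "((\<lambda>u. u powr (r - 1)) \<longlongrightarrow> 0) (at_right 0)"
    using \<open>1 < r\<close> by (intro tendsto_powr_at_right_0) simp
  ultimately have "((\<lambda>u. G u / u - u powr (r - 1)) \<longlongrightarrow> r - m / k - 0) (at_right 0)"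
    by (rule tendsto_diff)
  moreover have "0 < r - m / k - 0"
    using assms by (simp add: field_simps)
  ultimately have "\<forall>\<^sub>F u in at_right 0. 0 < G u / u - u powr (r - 1)"
    by (rule order_tendstoD)
  with eventually_at_right_less show ?thesis
  proof eventually_elim
    case (elim u)
    have "u powr (r - 1) = u powr r / u"
      using \<open>0 < u\<close> by (simp add: powr_diff)
    with elim have "u powr r / u < G u / u"
      by simp
    with \<open>0 < u\<close> have "u powr r < G u"
      by (simp add: divide_less_cancel)
    then show ?case
      by (simp add: G_def)
  qed
qed

section \<open>The test matrices\<close>

text \<open>For \<open>c = cos \<theta>\<close>, \<open>s = sin \<theta>\<close> this is the matrix with eigenvalue \<open>1\<close> on \<open>(c, s)\<close>
  and \<open>\<delta>\<close> on \<open>(-s, c)\<close>.\<close>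
definition tilted :: "real \<Rightarrow> real \<Rightarrow> real \<Rightarrow> complex^2^2" where
  "tilted c s \<delta> = sym2 (c\<^sup>2 + s\<^sup>2 * \<delta>) (c * s * (1 - \<delta>)) (s\<^sup>2 + c\<^sup>2 * \<delta>)"

lemma sym2_pos_tilted:
  assumes "c\<^sup>2 + s\<^sup>2 = 1" and "0 < \<delta>"
  shows "sym2_pos (c\<^sup>2 + s\<^sup>2 * \<delta>) (c * s * (1 - \<delta>)) (s\<^sup>2 + c\<^sup>2 * \<delta>)"
  using sym2_pos_rotation[OF assms(1) zero_less_one assms(2)] by simp

lemma cmat_posdef_tilted:
  assumes "c\<^sup>2 + s\<^sup>2 = 1" and "0 < \<delta>"
  shows "cmat_posdef (tilted c s \<delta>)"
  unfolding tilted_def using assms by (intro cmat_posdef_sym2 sym2_pos_tilted)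

lemma cmat_powr_tilted:
  assumes "c\<^sup>2 + s\<^sup>2 = 1" and "0 < \<delta>"
  shows "cmat_powr (tilted c s \<delta>) t = tilted c s (\<delta> powr t)"
  using cmat_powr_sym2_rotation[OF assms(1) zero_less_one assms(2), of t] by (simp add: tilted_def)

lemma cmat_powr_tilted_1_0:
  assumes "0 < \<delta>"
  shows "cmat_powr (tilted 1 0 \<delta>) t = tilted 1 0 (\<delta> powr t)"
  using cmat_powr_tilted[of 1 0 \<delta> t] assms by simp

lemma tendsto_trace_R_mean_tilted:
  assumes cs: "c\<^sup>2 + s\<^sup>2 = 1" and "0 < \<alpha>" and "\<alpha> < 1" and "0 < p"
  shows "((\<lambda>\<delta>. Re (cmat_trace (R_mean \<alpha> p (tilted 1 0 \<delta>) (tilted c s \<delta>))))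
           \<longlongrightarrow> (c\<^sup>2) powr (1 / p)) (at_right 0)"
proof -
  define e where "e \<delta> = \<delta> powr ((1 - \<alpha>) * p / 2)" for \<delta> :: real
  define L where "L \<delta> = \<delta> powr (\<alpha> * p)" for \<delta> :: real
  define a b d where "a \<delta> = c\<^sup>2 + s\<^sup>2 * L \<delta>" and "b \<delta> = e \<delta> * (c * s * (1 - L \<delta>))"
    and "d \<delta> = e \<delta> * e \<delta> * (s\<^sup>2 + c\<^sup>2 * L \<delta>)" for \<delta>
  have R: "R_mean \<alpha> p (tilted 1 0 \<delta>) (tilted c s \<delta>) = cmat_powr (sym2 (a \<delta>) (b \<delta>) (d \<delta>)) (1 / p)"
    if "0 < \<delta>" for \<delta>
    unfolding R_mean_def cmat_powr_tilted[OF cs that] cmat_powr_tilted_1_0[OF that]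
    by (simp add: tilted_def sym2_sandwich_diag a_def b_def d_def e_def L_def)
  have pos: "\<forall>\<^sub>F \<delta> in at_right 0. sym2_pos (a \<delta>) (b \<delta>) (d \<delta>)"
    using eventually_at_right_less by eventually_elim
      (auto simp: a_def b_def d_def e_def L_def intro!: sym2_pos_sandwich sym2_pos_tilted cs)
  have "(e \<longlongrightarrow> 0) (at_right 0)" "(L \<longlongrightarrow> 0) (at_right 0)"
    unfolding e_def L_def using assms by (auto intro!: tendsto_powr_at_right_0)
  then have "(a \<longlongrightarrow> c\<^sup>2) (at_right 0)" "(b \<longlongrightarrow> 0) (at_right 0)" "(d \<longlongrightarrow> 0) (at_right 0)"
    unfolding a_def b_def d_def by (auto intro!: tendsto_eq_intros)
  from tendsto_trace_cmat_powr_sym2[OF this pos, of "1 / p"] \<open>0 < p\<close>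
  have "((\<lambda>\<delta>. Re (cmat_trace (cmat_powr (sym2 (a \<delta>) (b \<delta>) (d \<delta>)) (1 / p))))
          \<longlongrightarrow> (c\<^sup>2) powr (1 / p)) (at_right 0)"
    using sym2_eig_eqI[of "c\<^sup>2" 0 "c\<^sup>2" 0 0] by simp
  moreover have "\<forall>\<^sub>F \<delta> in at_right 0. Re (cmat_trace (cmat_powr (sym2 (a \<delta>) (b \<delta>) (d \<delta>)) (1 / p)))
      = Re (cmat_trace (R_mean \<alpha> p (tilted 1 0 \<delta>) (tilted c s \<delta>)))"
    using eventually_at_right_less by eventually_elim (simp add: R)
  ultimately show ?thesis
    by (rule Lim_transform_eventually)
qed

lemma tendsto_trace_A_mean_tilted:
  assumes cs: "c\<^sup>2 + s\<^sup>2 = 1" and "0 < \<alpha>" and "\<alpha> < 1" and "0 < q"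
    and u: "u \<le> 1 / 2" "u * (1 - u) = \<alpha> * (1 - \<alpha>) * s\<^sup>2"
  shows "((\<lambda>\<delta>. Re (cmat_trace (A_mean \<alpha> q (tilted 1 0 \<delta>) (tilted c s \<delta>))))
           \<longlongrightarrow> (1 - u) powr (1 / q) + u powr (1 / q)) (at_right 0)"
proof -
  define L where "L \<delta> = \<delta> powr q" for \<delta> :: real
  define a b d where "a \<delta> = (1 - \<alpha>) + \<alpha> * (c\<^sup>2 + s\<^sup>2 * L \<delta>)" and "b \<delta> = \<alpha> * (c * s * (1 - L \<delta>))"
    and "d \<delta> = (1 - \<alpha>) * L \<delta> + \<alpha> * (s\<^sup>2 + c\<^sup>2 * L \<delta>)" for \<delta>
  have A: "A_mean \<alpha> q (tilted 1 0 \<delta>) (tilted c s \<delta>) = cmat_powr (sym2 (a \<delta>) (b \<delta>) (d \<delta>)) (1 / q)"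
    if "0 < \<delta>" for \<delta>
    unfolding A_mean_def cmat_powr_tilted[OF cs that] cmat_powr_tilted_1_0[OF that]
    by (simp add: tilted_def a_def b_def d_def L_def)
  have pos: "\<forall>\<^sub>F \<delta> in at_right 0. sym2_pos (a \<delta>) (b \<delta>) (d \<delta>)"
    using eventually_at_right_less
  proof eventually_elim
    case (elim \<delta>)
    then show ?case
      unfolding a_def b_def d_def L_def using assms
      by (intro sym2_pos_add_diag sym2_pos_scale sym2_pos_tilted) simp_all
  qed
  have lims: "(a \<longlongrightarrow> 1 - \<alpha> + \<alpha> * c\<^sup>2) (at_right 0)" "(b \<longlongrightarrow> \<alpha> * c * s) (at_right 0)"
    "(d \<longlongrightarrow> \<alpha> * s\<^sup>2) (at_right 0)"
    unfolding a_def b_def d_def using tendsto_powr_at_right_0[OF \<open>0 < q\<close>, folded L_def]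
    by (auto intro!: tendsto_eq_intros)
  have "\<alpha> * c\<^sup>2 + \<alpha> * s\<^sup>2 = \<alpha>"
    using cs by (metis distrib_left mult.right_neutral)
  then have "(1 - u) + u = (1 - \<alpha> + \<alpha> * c\<^sup>2) + \<alpha> * s\<^sup>2"
    by simp
  moreover have "(1 - u) * u = (1 - \<alpha> + \<alpha> * c\<^sup>2) * (\<alpha> * s\<^sup>2) - (\<alpha> * c * s)\<^sup>2"
    using u(2) by (simp add: power2_eq_square algebra_simps)
  moreover have "u \<le> 1 - u"
    using u(1) by simp
  ultimately have eig: "sym2_eig_max (1 - \<alpha> + \<alpha> * c\<^sup>2) (\<alpha> * c * s) (\<alpha> * s\<^sup>2) = 1 - u"
    "sym2_eig_min (1 - \<alpha> + \<alpha> * c\<^sup>2) (\<alpha> * c * s) (\<alpha> * s\<^sup>2) = u"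
    by (rule sym2_eig_eqI)+
  have "((\<lambda>\<delta>. Re (cmat_trace (cmat_powr (sym2 (a \<delta>) (b \<delta>) (d \<delta>)) (1 / q))))
      \<longlongrightarrow> (1 - u) powr (1 / q) + u powr (1 / q)) (at_right 0)"
    using tendsto_trace_cmat_powr_sym2[OF lims pos, of "1 / q"] \<open>0 < q\<close> by (simp only: eig) simp
  moreover have "\<forall>\<^sub>F \<delta> in at_right 0. Re (cmat_trace (cmat_powr (sym2 (a \<delta>) (b \<delta>) (d \<delta>)) (1 / q)))
      = Re (cmat_trace (A_mean \<alpha> q (tilted 1 0 \<delta>) (tilted c s \<delta>)))"
    using eventually_at_right_less by eventually_elim (simp add: A)
  ultimately show ?thesis
    by (rule Lim_transform_eventually)
qed

lemma trace_inequality_imp_powr_inequality: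
  fixes \<alpha> p q u :: real
  assumes "0 < \<alpha>" and "\<alpha> < 1" and "0 < p" and "0 < q"
    and trace_le: "\<forall>A B :: complex^2^2. cmat_posdef A \<longrightarrow> cmat_posdef B \<longrightarrow>
           Re (cmat_trace (R_mean \<alpha> p A B)) \<le> Re (cmat_trace (A_mean \<alpha> q A B))"
    and u: "0 \<le> u" "u \<le> 1 / 2" "u * (1 - u) \<le> \<alpha> * (1 - \<alpha>)"
  shows "(1 - u * (1 - u) / (\<alpha> * (1 - \<alpha>))) powr (1 / p) \<le> (1 - u) powr (1 / q) + u powr (1 / q)"
proof -
  define s where "s = sqrt (u * (1 - u) / (\<alpha> * (1 - \<alpha>)))"
  define c where "c = sqrt (1 - s\<^sup>2)"
  have "0 < \<alpha> * (1 - \<alpha>)"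
    using assms(1,2) by simp
  with u have s2: "s\<^sup>2 = u * (1 - u) / (\<alpha> * (1 - \<alpha>))" "s\<^sup>2 \<le> 1"
    by (simp_all add: s_def)
  then have cs: "c\<^sup>2 + s\<^sup>2 = 1"
    by (simp add: c_def)
  have "u * (1 - u) = \<alpha> * (1 - \<alpha>) * s\<^sup>2"
    using s2(1) assms(1,2) by simp
  with u(2) have lim_A: "((\<lambda>\<delta>. Re (cmat_trace (A_mean \<alpha> q (tilted 1 0 \<delta>) (tilted c s \<delta>))))
      \<longlongrightarrow> (1 - u) powr (1 / q) + u powr (1 / q)) (at_right 0)"
    by (intro tendsto_trace_A_mean_tilted cs assms(1,2,4))
  have "\<forall>\<^sub>F \<delta> in at_right 0. Re (cmat_trace (R_mean \<alpha> p (tilted 1 0 \<delta>) (tilted c s \<delta>)))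
      \<le> Re (cmat_trace (A_mean \<alpha> q (tilted 1 0 \<delta>) (tilted c s \<delta>)))"
    using eventually_at_right_less
    by eventually_elim (use trace_le cmat_posdef_tilted cs in simp)
  from tendsto_le[OF trivial_limit_at_right_real lim_A tendsto_trace_R_mean_tilted[OF cs assms(1-3)] this]
  have "(c\<^sup>2) powr (1 / p) \<le> (1 - u) powr (1 / q) + u powr (1 / q)" .
  moreover have "c\<^sup>2 = 1 - u * (1 - u) / (\<alpha> * (1 - \<alpha>))"
    using cs s2(1) by linarith
  ultimately show ?thesis
    by simp
qed

theorem theorem4p12:
  fixes \<alpha> p q :: real
  assumes "0 < \<alpha>" and "\<alpha> < 1" and "0 < p" and "0 < q"
    and "\<forall>A B :: complex^2^2. cmat_posdef A \<longrightarrow> cmat_posdef B \<longrightarrow>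
           Re (cmat_trace (R_mean \<alpha> p A B)) \<le> Re (cmat_trace (A_mean \<alpha> q A B))"
  shows "min 1 (\<alpha> * (1 - \<alpha>) * p) \<le> q"
proof (rule ccontr)
  assume contra: "\<not> ?thesis"
  define k where "k = \<alpha> * (1 - \<alpha>)"
  have k: "0 < k" "1 < 1 / q" "1 / p < k * (1 / q)"
    using contra assms(1-4) by (auto simp: k_def field_simps)
  have "\<forall>\<^sub>F u in at_right 0. 0 < u \<and> u < min (1 / 2) k"
    unfolding eventually_at_right_field using \<open>0 < k\<close> by (intro exI[of _ "min (1 / 2) k"]) auto
  with eventually_powr_gap[OF k] have "\<forall>\<^sub>F u in at_right 0.
      (1 - u) powr (1 / q) + u powr (1 / q) < (1 - u * (1 - u) / k) powr (1 / p) \<and> 0 < u \<and> u < min (1 / 2) k"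
    by (rule eventually_conj)
  then obtain u where gap: "(1 - u) powr (1 / q) + u powr (1 / q) < (1 - u * (1 - u) / k) powr (1 / p)"
    and u: "0 < u" "u < 1 / 2" "u < k"
    using eventually_happens'[OF trivial_limit_at_right_real] by auto
  have "u * (1 - u) \<le> k"
    using u mult_left_le[of "1 - u" u] by linarith
  with u gap show False
    using trace_inequality_imp_powr_inequality[OF assms, of u] by (simp add: k_def)
qed

end
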